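(* Let $\phi_1,\ldots,\phi_N\in\mathbb{R}^D$, $\Phi=(\phi_1,\ldots,\phi_N)\in\mathbb{R}^{D\times N}$, $t\in\{0,1\}^N$, $\sigma(a)=1/(1+e^{-a})$, $y(\theta)=(\sigma(\theta^{\rm T}\phi_n))_{n=1}^N$, and $\Psi_{\rm data}(\theta)=-\sum_{n=1}^N\{t_n\ln y_n(\theta)+(1-t_n)\ln(1-y_n(\theta))\}$. For an ensemble $\theta^{(1)},\ldots,\theta^{(M)}\in\mathbb{R}^D$ let $\hat m=\frac1M\sum_j\theta^{(j)}$, $\hat\Sigma=\frac1{M-1}\sum_j(\theta^{(j)}-\hat m)(\theta^{(j)}-\hat m)^{\rm T}$, and $$\Psi_{\rm KBF}(\theta^{(1)},\ldots,\theta^{(M)})=\frac12\sum_{j=1}^M\Psi_{\rm data}(\theta^{(j)})+\frac M2\Psi_{\rm data}\Big(\frac1M\sum_{j=1}^M\theta^{(j)}\Big).$$ Then the EnKBF equations $$\frac{\rm d}{{\rm d}\tau}\theta^{(i)}_\tau=-\frac12\hat\Sigma_\tau\Phi\big(y(\theta^{(i)}_\tau)+y(\hat m_\tau)-2t\big),\qquad i=1,\ldots,M,$$ have the gradient structure $$\frac{\rm d}{{\rm d}\tau}\theta^{(i)}_\tau=-\hat\Sigma_\tau\nabla_{\theta^{(i)}}\Psi_{\rm KBF}(\theta^{(1)}_\tau,\ldots,\theta^{(M)}_\tau),\qquad i=1,\ldots,M,$$ where $\nabla_{\theta^{(i)}}$ denotes the gradient with respect to the $i$-th argument (the mean $\hat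 m$ inside $\Psi_{\rm KBF}$ being regarded as a function of the ensemble). *)

theory Defs
  imports "HOL-Analysis.Analysis"
begin

definition sigmoid :: "real \<Rightarrow> real" where
  "sigmoid a = 1 / (1 + exp (- a))"

definition Phi_mat :: "('n::finite \<Rightarrow> real^'d::finite) \<Rightarrow> real^'n^'d" where
  "Phi_mat \<phi> = (\<chi> d n. \<phi> n $ d)"

definition yvec :: "('n::finite \<Rightarrow> real^'d::finite) \<Rightarrow> real^'d \<Rightarrow> real^'n" where
  "yvec \<phi> \<theta> = (\<chi> n. sigmoid (\<theta> \<bullet> \<phi> n))"

definition Psi_data :: "('n::finite \<Rightarrow> real^'d::finite) \<Rightarrow> real^'n \<Rightarrow> real^'d \<Rightarrow> real" where
  "Psi_data \<phi> t \<theta> =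
     - (\<Sum>n\<in>UNIV. t $ n * ln (yvec \<phi> \<theta> $ n) + (1 - t $ n) * ln (1 - yvec \<phi> \<theta> $ n))"

definition ens_mean :: "('m::finite \<Rightarrow> real^'d::finite) \<Rightarrow> real^'d" where
  "ens_mean \<theta>s = (1 / real CARD('m)) *\<^sub>R (\<Sum>j\<in>UNIV. \<theta>s j)"

definition outer_prod :: "real^'d::finite \<Rightarrow> real^'d \<Rightarrow> real^'d^'d" where
  "outer_prod u v = (\<chi> a b. u $ a * v $ b)"

definition ens_cov :: "('m::finite \<Rightarrow> real^'d::finite) \<Rightarrow> real^'d^'d" where
  "ens_cov \<theta>s = (1 / (real CARD('m) - 1)) *\<^sub>R
      (\<Sum>j\<in>UNIV. outer_prod (\<theta>s j - ens_mean \<theta>s) (\<theta>s j - ens_mean \<theta>s))"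

definition Psi_KBF :: "('n::finite \<Rightarrow> real^'d::finite) \<Rightarrow> real^'n \<Rightarrow> ('m::finite \<Rightarrow> real^'d) \<Rightarrow> real" where
  "Psi_KBF \<phi> t \<theta>s = (1/2) * (\<Sum>j\<in>UNIV. Psi_data \<phi> t (\<theta>s j))
      + (real CARD('m) / 2) * Psi_data \<phi> t (ens_mean \<theta>s)"

end

theory Submission
  imports Defs
begin

text \<open>Since \<open>ln \<sigma>(a) = -ln (1 + exp (-a))\<close> and \<open>ln (1 - \<sigma>(a)) = -a - ln (1 + exp (-a))\<close>,
  the log-likelihood \<open>s ln \<sigma>(a) + (1 - s) ln (1 - \<sigma>(a))\<close> has derivative \<open>s - \<sigma>(a)\<close>; summing
  over the data gives \<open>\<nabla>\<Psi>_data(\<theta>) = \<Phi> (y(\<theta>) - t)\<close>. In \<open>\<Psi>_KBF\<close> the \<open>i\<close>-th particle enters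
  once directly and once through the ensemble mean, whose slope \<open>1/M\<close> cancels the weight \<open>M/2\<close>.
  Hence \<open>\<nabla>\<^sub>i \<Psi>_KBF = \<Phi> (y(\<theta>\<^sub>i) + y(m) - 2t) / 2\<close>, and multiplying by \<open>\<Sigma>\<close> gives the
  EnKBF drift.\<close>

lemma ln_sigmoid: "ln (sigmoid a) = - ln (1 + exp (- a))"
  unfolding sigmoid_def by (simp add: ln_div add_pos_pos)

lemma ln_one_minus_sigmoid: "ln (1 - sigmoid a) = - a - ln (1 + exp (- a))"
proof -
  have pos: "1 + exp (- a) > 0" by (simp add: add_pos_pos)
  have "1 - sigmoid a = exp (- a) / (1 + exp (- a))"
    unfolding sigmoid_def using pos by (simp add: field_simps)
  then show ?thesis using pos by (simp add: ln_div)
qed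

lemma log_likelihood_has_real_derivative:
  "((\<lambda>a. s * ln (sigmoid a) + (1 - s) * ln (1 - sigmoid a)) has_real_derivative (s - sigmoid a)) (at a)"
proof -
  have pos: "1 + exp (- a) > 0" by (simp add: add_pos_pos)
  have "(\<lambda>a. s * ln (sigmoid a) + (1 - s) * ln (1 - sigmoid a))
        = (\<lambda>a. - ln (1 + exp (- a)) - (1 - s) * a)"
    by (simp add: ln_sigmoid ln_one_minus_sigmoid algebra_simps)
  moreover have "((\<lambda>a. - ln (1 + exp (- a)) - (1 - s) * a) has_real_derivative
        exp (- a) / (1 + exp (- a)) - (1 - s)) (at a)"
    using pos by (auto intro!: derivative_eq_intros)
  moreover have "exp (- a) / (1 + exp (- a)) - (1 - s) = s - sigmoid a"
    unfolding sigmoid_def using pos by (simp add: field_simps)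
  ultimately show ?thesis by simp
qed

lemma inner_Phi_mat_mult:
  "(Phi_mat \<phi> *v v) \<bullet> h = (\<Sum>n\<in>UNIV. v $ n * (h \<bullet> \<phi> n))"
proof -
  have "(Phi_mat \<phi> *v v) \<bullet> h = (\<Sum>d\<in>UNIV. \<Sum>n\<in>UNIV. v $ n * (\<phi> n $ d * h $ d))"
    unfolding Phi_mat_def matrix_vector_mult_def inner_vec_def
    by (simp add: sum_distrib_left sum_distrib_right mult_ac)
  also have "\<dots> = (\<Sum>n\<in>UNIV. v $ n * (h \<bullet> \<phi> n))"
    by (subst sum.swap) (simp add: inner_vec_def sum_distrib_left mult_ac)
  finally show ?thesis .
qed

lemma Psi_data_has_derivative:
  "(Psi_data \<phi> t has_derivative (\<lambda>h. (Phi_mat \<phi> *v (yvec \<phi> \<theta> - t)) \<bullet> h)) (at \<theta>)"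
proof -
  have term_deriv: "((\<lambda>x. t $ n * ln (sigmoid (x \<bullet> \<phi> n)) + (1 - t $ n) * ln (1 - sigmoid (x \<bullet> \<phi> n)))
      has_derivative (\<lambda>h. (t $ n - sigmoid (\<theta> \<bullet> \<phi> n)) * (h \<bullet> \<phi> n))) (at \<theta>)" for n
    using has_derivative_compose[OF has_derivative_inner_left[OF has_derivative_ident]
        has_field_derivative_imp_has_derivative[OF log_likelihood_has_real_derivative[of "t $ n" "\<theta> \<bullet> \<phi> n"]]]
    by simp
  have "(Psi_data \<phi> t has_derivative
      (\<lambda>h. - (\<Sum>n\<in>UNIV. (t $ n - sigmoid (\<theta> \<bullet> \<phi> n)) * (h \<bullet> \<phi> n)))) (at \<theta>)"
    unfolding Psi_data_def yvec_def
    by (simp only: vec_lambda_beta) (intro has_derivative_minus has_derivative_sum term_deriv)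
  moreover have "- (\<Sum>n\<in>UNIV. (t $ n - sigmoid (\<theta> \<bullet> \<phi> n)) * (h \<bullet> \<phi> n))
      = (Phi_mat \<phi> *v (yvec \<phi> \<theta> - t)) \<bullet> h" for h
    unfolding inner_Phi_mat_mult yvec_def by (simp add: sum_negf[symmetric] algebra_simps)
  ultimately show ?thesis by simp
qed

lemma ens_mean_fun_upd:
  "ens_mean (\<theta>s(i := x)) = ens_mean \<theta>s + (1 / real CARD('m)) *\<^sub>R (x - \<theta>s i)"
  for \<theta>s :: "'m::finite \<Rightarrow> real^'d::finite"
proof -
  have "(\<Sum>j\<in>UNIV. (\<theta>s(i := x)) j) = (\<Sum>j\<in>UNIV. \<theta>s j) + (x - \<theta>s i)"
    by (simp add: sum.remove[of UNIV i])
  then show ?thesis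
    unfolding ens_mean_def by (simp add: scaleR_right_distrib)
qed

lemma sum_fun_upd_eq:
  "(\<Sum>j\<in>UNIV. f ((\<theta>s(i := x)) j)) = f x + (\<Sum>j\<in>UNIV - {i}. f (\<theta>s j))"
  for \<theta>s :: "'m::finite \<Rightarrow> 'a"
  by (simp add: sum.remove[of UNIV i])

lemma Psi_KBF_partial_has_derivative:
  fixes \<theta>s :: "'m::finite \<Rightarrow> real^'d::finite"
  shows "((\<lambda>x. Psi_KBF \<phi> t (\<theta>s(i := x))) has_derivative
           (\<lambda>h. ((1/2) *\<^sub>R (Phi_mat \<phi> *v (yvec \<phi> (\<theta>s i) + yvec \<phi> (ens_mean \<theta>s) - 2 *\<^sub>R t))) \<bullet> h))
         (at (\<theta>s i))"
proof -
  define M where "M = real CARD('m)"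
  define m where "m = ens_mean \<theta>s"
  define g\<^sub>i where "g\<^sub>i = Phi_mat \<phi> *v (yvec \<phi> (\<theta>s i) - t)"
  define g\<^sub>m where "g\<^sub>m = Phi_mat \<phi> *v (yvec \<phi> m - t)"
  have "M > 0" unfolding M_def by simp
  have KBF_eq: "Psi_KBF \<phi> t (\<theta>s(i := x)) = (1/2) * Psi_data \<phi> t x
      + (1/2) * (\<Sum>j\<in>UNIV - {i}. Psi_data \<phi> t (\<theta>s j))
      + (M / 2) * Psi_data \<phi> t (m + (1 / M) *\<^sub>R (x - \<theta>s i))" for x
    unfolding Psi_KBF_def sum_fun_upd_eq ens_mean_fun_upd M_def m_def by (simp add: algebra_simps)
  have affine: "((\<lambda>x. m + (1 / M) *\<^sub>R (x - \<theta>s i)) has_derivative (\<lambda>h. (1 / M) *\<^sub>R h)) (at (\<theta>s i))"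
    by (auto intro!: derivative_eq_intros)
  have mean_deriv: "((\<lambda>x. Psi_data \<phi> t (m + (1 / M) *\<^sub>R (x - \<theta>s i))) has_derivative
      (\<lambda>h. g\<^sub>m \<bullet> ((1 / M) *\<^sub>R h))) (at (\<theta>s i))"
    using has_derivative_compose[OF affine Psi_data_has_derivative[of \<phi> t "m + (1 / M) *\<^sub>R (\<theta>s i - \<theta>s i)"]]
    unfolding g\<^sub>m_def by (simp only: diff_self scaleR_zero_right add_0_right)
  have "((\<lambda>x. Psi_KBF \<phi> t (\<theta>s(i := x))) has_derivative
      (\<lambda>h. (1/2) * (g\<^sub>i \<bullet> h) + 0 + (M / 2) * (g\<^sub>m \<bullet> ((1 / M) *\<^sub>R h)))) (at (\<theta>s i))"
    unfolding KBF_eq g\<^sub>i_def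
    by (intro has_derivative_add has_derivative_mult_right has_derivative_const
        Psi_data_has_derivative mean_deriv)
  also have "(\<lambda>h. (1/2) * (g\<^sub>i \<bullet> h) + 0 + (M / 2) * (g\<^sub>m \<bullet> ((1 / M) *\<^sub>R h)))
      = (\<lambda>h. ((1/2) *\<^sub>R (g\<^sub>i + g\<^sub>m)) \<bullet> h)"
    using \<open>M > 0\<close> by (intro ext) (simp add: inner_add_left algebra_simps)
  also have "g\<^sub>i + g\<^sub>m = Phi_mat \<phi> *v (yvec \<phi> (\<theta>s i) + yvec \<phi> m - 2 *\<^sub>R t)"
    unfolding g\<^sub>i_def g\<^sub>m_def matrix_vector_right_distrib[symmetric]
    by (intro arg_cong[where f = "(*v) (Phi_mat \<phi>)"]) (simp add: scaleR_2)
  finally show ?thesis unfolding m_def .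
qed

theorem mainTheorem4:
  fixes \<phi> :: "'n::finite \<Rightarrow> real^'d::finite"
    and t :: "real^'n"
    and \<theta>s :: "'m::finite \<Rightarrow> real^'d"
    and i :: 'm
  assumes "\<forall>n. t $ n \<in> {0, 1}"
  shows "\<exists>g. ((\<lambda>x. Psi_KBF \<phi> t (\<theta>s(i := x))) has_derivative (\<lambda>h. g \<bullet> h)) (at (\<theta>s i))
           \<and> - (ens_cov \<theta>s *v g)
             = - ((1/2) *\<^sub>R (ens_cov \<theta>s *v (Phi_mat \<phi> *v
                   (yvec \<phi> (\<theta>s i) + yvec \<phi> (ens_mean \<theta>s) - 2 *\<^sub>R t))))"
proof (intro exI conjI)
  show "((\<lambda>x. Psi_KBF \<phi> t (\<theta>s(i := x))) has_derivative
      (\<lambda>h. ((1/2) *\<^sub>R (Phi_mat \<phi> *v (yvec \<phi> (\<theta>s i) + yvec \<phi> (ens_mean \<theta>s) - 2 *\<^sub>R t))) \<bullet> h))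
    (at (\<theta>s i))"
    by (rule Psi_KBF_partial_has_derivative)
qed (simp only: matrix_vector_mult_scaleR)

end
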